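(* Let $S$ be a finite set with $|S|=n$ and let $\mathfrak S$ be a collection of subsets of $S$ such that $|r\triangle s|\in\{0,4,6,8\}$ for all $r,s\in\mathfrak S$ (the subsets may have different cardinalities). Then $|\mathfrak S|\le\max_{m\ge0}\big(\mathcal A_{m,n}+\mathcal A_{m+2,n}+\mathcal A_{m+4,n}+\mathcal A_{m+6,n}+\mathcal A_{m+8,n}\big)$.
   Context: For $0\le m\le n$, $\mathcal A_{m,n}$ is the maximal cardinality of a collection of $m$-element subsets of an $n$-element set such that any two members $r,s$ satisfy $|r\triangle s|\in\{0,4,6,8\}$; one sets $\mathcal A_{m,n}=0$ unless $0\le m\le n$. $\triangle$ is symmetric difference. *)

theory Defs
  imports Main
begin

definition sd_admissible :: "'a set set \<Rightarrow> bool" where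
  "sd_admissible F \<longleftrightarrow>
     (\<forall>r\<in>F. \<forall>s\<in>F. card ((r - s) \<union> (s - r)) \<in> {0, 4, 6, 8})"

definition A :: "nat \<Rightarrow> nat \<Rightarrow> nat" where
  "A m n = Max (card ` {F. F \<subseteq> {r. r \<subseteq> {..<n} \<and> card r = m} \<and> sd_admissible F})"

end

theory Submission
  imports Defs
begin

text \<open>Two members of an admissible family have cardinalities differing by an even number
  of at most 8, since that difference is bounded by, and has the parity of, the size of
  their symmetric difference. Hence if m is the least cardinality occurring, the family
  splits into the five uniform subfamilies of cardinalities m, m+2, ..., m+8, each of
  which is admissible and so has at most A (m+k) n members.\<close>

lemma finite_admissible_families:
  "finite {F. F \<subseteq> {r. r \<subseteq> {..<n::nat} \<and> card r = m} \<and> sd_admissible F}"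
  by (rule finite_subset[of _ "Pow (Pow {..<n})"]) auto

lemma A_le_power: "A m n \<le> 2 ^ n"
  unfolding A_def
proof (rule Max.boundedI)
  show "finite (card ` {F. F \<subseteq> {r. r \<subseteq> {..<n} \<and> card r = m} \<and> sd_admissible F})"
    using finite_admissible_families by blast
  have "{} \<in> {F. F \<subseteq> {r. r \<subseteq> {..<n} \<and> card r = m} \<and> sd_admissible F}"
    by (simp add: sd_admissible_def)
  then show "card ` {F. F \<subseteq> {r. r \<subseteq> {..<n} \<and> card r = m} \<and> sd_admissible F} \<noteq> {}"
    by blast
next
  fix a assume "a \<in> card ` {F. F \<subseteq> {r. r \<subseteq> {..<n} \<and> card r = m} \<and> sd_admissible F}"
  then obtain F where "a = card F" and "F \<subseteq> Pow {..<n}" by auto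
  then show "a \<le> 2 ^ n"
    using card_mono[of "Pow {..<n}" F] by (simp add: card_Pow)
qed

lemma sd_admissible_subset: "sd_admissible F \<Longrightarrow> G \<subseteq> F \<Longrightarrow> sd_admissible G"
  unfolding sd_admissible_def by blast

lemma card_sym_diff_image:
  assumes "inj_on f X" and "r \<subseteq> X" and "s \<subseteq> X"
  shows "card (sym_diff (f ` r) (f ` s)) = card (sym_diff r s)"
proof -
  have "sym_diff (f ` r) (f ` s) = f ` sym_diff r s"
    using inj_on_image_set_diff[OF assms(1), of r s] inj_on_image_set_diff[OF assms(1), of s r]
      assms(2,3) by (auto simp: image_Un)
  moreover have "inj_on f (sym_diff r s)"
    using assms by (blast intro: inj_on_subset)
  ultimately show ?thesis
    by (simp add: card_image)
qed

lemma sd_admissible_image: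
  assumes "inj_on f X" and "\<forall>r\<in>F. r \<subseteq> X" and "sd_admissible F"
  shows "sd_admissible (image f ` F)"
  using assms card_sym_diff_image[OF assms(1)] unfolding sd_admissible_def by auto

lemma card_le_A:
  fixes S :: "'a set"
  assumes "finite S" and "card S = n"
    and "F \<subseteq> {r. r \<subseteq> S \<and> card r = m}" and "sd_admissible F"
  shows "card F \<le> A m n"
proof -
  obtain f where f: "bij_betw f S {..<n}"
    using assms(1,2) by (metis card_lessThan finite_lessThan finite_same_card_bij)
  then have inj: "inj_on f S" by (rule bij_betw_imp_inj_on)
  have "inj_on (image f) F"
    using assms(3) by (auto intro: inj_on_subset[OF inj_on_image_Pow[OF inj]])
  then have "card (image f ` F) = card F" by (rule card_image)
  moreover have "image f ` F \<subseteq> {r. r \<subseteq> {..<n} \<and> card r = m}"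
  proof
    fix x assume "x \<in> image f ` F"
    then obtain r where r: "x = f ` r" "r \<subseteq> S" "card r = m"
      using assms(3) by blast
    then have "x \<subseteq> {..<n}"
      using bij_betw_imp_surj_on[OF f] by blast
    moreover have "card x = m"
      using r inj_on_subset[OF inj] by (simp add: card_image)
    ultimately show "x \<in> {r. r \<subseteq> {..<n} \<and> card r = m}" by simp
  qed
  moreover have "sd_admissible (image f ` F)"
    using sd_admissible_image[OF inj] assms(3,4) by blast
  ultimately show ?thesis
    unfolding A_def using finite_admissible_families by (metis (mono_tags) Max_ge finite_imageI
        image_eqI mem_Collect_eq)
qed

lemma card_sym_diff:
  assumes "finite r" and "finite s"
  shows "card (sym_diff r s) + 2 * card (r \<inter> s) = card r + card s"
proof -
  have "card (sym_diff r s) = card (r - s) + card (s - r)"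
    using assms by (intro card_Un_disjoint) auto
  moreover have "card r = card (r - s) + card (r \<inter> s)" "card s = card (s - r) + card (r \<inter> s)"
    using card_Int_Diff[OF assms(1), of s] card_Int_Diff[OF assms(2), of r]
    by (simp_all add: Int_commute)
  ultimately show ?thesis by simp
qed

lemma sd_admissible_card_gap:
  assumes "sd_admissible F" and "r \<in> F" and "s \<in> F"
    and "finite r" and "finite s" and "card s \<le> card r"
  shows "card r - card s \<in> {0, 2, 4, 6, 8}"
proof -
  have "card (sym_diff r s) \<in> {0, 4, 6, 8}"
    using assms(1-3) unfolding sd_admissible_def by blast
  moreover have "card (r \<inter> s) \<le> card s"
    using assms(5) by (simp add: card_mono)
  ultimately show ?thesis
    using card_sym_diff[OF assms(4,5)] assms(6) by auto presburger+
qed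

lemma sd_admissible_cards_in_window:
  assumes "finite S" and "\<forall>r\<in>F. r \<subseteq> S" and "sd_admissible F"
  obtains m where "F = (\<Union>k\<in>{0, 2, 4, 6, 8}. {r \<in> F. card r = m + k})"
proof (cases "F = {}")
  case True
  then show ?thesis using that by simp
next
  case False
  have "finite F"
    using assms(1,2) by (meson Pow_iff finite_Pow_iff finite_subset subsetI)
  define m where "m = Min (card ` F)"
  have "m \<in> card ` F"
    unfolding m_def using \<open>finite F\<close> False by (intro Min_in) auto
  then obtain s where s: "s \<in> F" "card s = m" by blast
  have "F \<subseteq> (\<Union>k\<in>{0, 2, 4, 6, 8}. {r \<in> F. card r = m + k})"
  proof
    fix r assume r: "r \<in> F"
    have "m \<le> card r" using r \<open>finite F\<close> unfolding m_def by simp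
    moreover have "finite r" "finite s" using r s(1) assms(1,2) finite_subset by blast+
    ultimately have "card r - m \<in> {0, 2, 4, 6, 8}"
      using sd_admissible_card_gap[OF assms(3) r s(1)] s(2) by simp
    then show "r \<in> (\<Union>k\<in>{0, 2, 4, 6, 8}. {r \<in> F. card r = m + k})"
      using r \<open>m \<le> card r\<close> by (intro UN_I[of "card r - m"]) auto
  qed
  then show ?thesis using that by blast
qed

lemma card_uniform_part_le_A:
  assumes "finite S" and "card S = n" and "\<forall>r\<in>F. r \<subseteq> S" and "sd_admissible F"
  shows "card {r \<in> F. card r = m} \<le> A m n"
proof (rule card_le_A[OF assms(1,2)])
  show "{r \<in> F. card r = m} \<subseteq> {r. r \<subseteq> S \<and> card r = m}"
    using assms(3) by auto
  show "sd_admissible {r \<in> F. card r = m}"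
    by (rule sd_admissible_subset[OF assms(4)]) auto
qed

lemma bdd_above_A_window_sums:
  "bdd_above (range (\<lambda>m. A m n + A (m+2) n + A (m+4) n + A (m+6) n + A (m+8) n))"
proof (rule bdd_aboveI[of _ "5 * 2 ^ n"])
  fix x assume "x \<in> range (\<lambda>m. A m n + A (m+2) n + A (m+4) n + A (m+6) n + A (m+8) n)"
  then obtain k where "x = A k n + A (k+2) n + A (k+4) n + A (k+6) n + A (k+8) n" by blast
  then show "x \<le> 5 * 2 ^ n"
    using A_le_power[of k n] A_le_power[of "k+2" n] A_le_power[of "k+4" n]
      A_le_power[of "k+6" n] A_le_power[of "k+8" n] by linarith
qed

theorem lemma4p3:
  fixes S :: "'a set" and \<S> :: "'a set set" and n :: nat
  assumes "finite S" and "card S = n"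
    and "\<forall>r\<in>\<S>. r \<subseteq> S"
    and "sd_admissible \<S>"
  shows "card \<S> \<le> (SUP m. A m n + A (m+2) n + A (m+4) n + A (m+6) n + A (m+8) n)"
proof -
  obtain m where window: "\<S> = (\<Union>k\<in>{0, 2, 4, 6, 8}. {r \<in> \<S>. card r = m + k})"
    using sd_admissible_cards_in_window[OF assms(1,3,4)] .
  have "card \<S> = card (\<Union>k\<in>{0, 2, 4, 6, 8}. {r \<in> \<S>. card r = m + k})"
    using window by (rule arg_cong)
  also have "\<dots> \<le> (\<Sum>k\<in>{0, 2, 4, 6, 8}. card {r \<in> \<S>. card r = m + k})"
    by (rule card_UN_le) simp
  also have "\<dots> \<le> (\<Sum>k\<in>{0, 2, 4, 6, 8}. A (m + k) n)"
    by (intro sum_mono card_uniform_part_le_A[OF assms])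
  also have "\<dots> = A m n + A (m+2) n + A (m+4) n + A (m+6) n + A (m+8) n"
    by simp
  also have "\<dots> \<le> (SUP m. A m n + A (m+2) n + A (m+4) n + A (m+6) n + A (m+8) n)"
    using bdd_above_A_window_sums by (rule cSUP_upper[OF UNIV_I])
  finally show ?thesis .
qed

end
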